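(* For any set $X$, the free inverse monoid $\operatorname{FIM}(X)$, regarded as an $F$-inverse monoid, is given by the presentation $\operatorname{FInv}\langle X\mid \operatorname{red}(w)=w^{\mathfrak m},\ w\in(X\cup X^{-1})^*\rangle$.
   Context: $\operatorname{FIM}(X)$ is $F$-inverse, with $(w_{\operatorname{FIM}(X)})^{\mathfrak m}=\operatorname{red}(w)_{\operatorname{FIM}(X)}$, where $\operatorname{red}(w)$ is the freely reduced form of the word $w$ and $s^{\mathfrak m}$ denotes the greatest element of the $\sigma$-class of $s$ (the $F$-inverse monoid signature being $(\cdot,1,{}^{-1},{}^{\mathfrak m})$). $\operatorname{FInv}\langle X\mid R\rangle$ denotes the quotient of the free $F$-inverse monoid on $X$ by the congruence generated by the relation $R$ on terms $u_0v_1^{\mathfrak m}u_1\cdots v_n^{\mathfrak m}u_n$ ($u_i,v_i\in(X\cup X^{-1})^*$). The claim is that this presented $F$-inverse monoid is isomorphic to $\operatorname{FIM}(X)$ via the map sending each generator $x$ to $x$. *)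

theory Defs
  imports Main
begin

record 'm fsig =
  fcar :: "'m set"
  fmul :: "'m \<Rightarrow> 'm \<Rightarrow> 'm"
  fone :: "'m"
  finv :: "'m \<Rightarrow> 'm"
  fmx  :: "'m \<Rightarrow> 'm"

definition inv_monoid :: "('m, 'z) fsig_scheme \<Rightarrow> bool" where
  "inv_monoid S \<longleftrightarrow>
     fone S \<in> fcar S \<and>
     (\<forall>a\<in>fcar S. \<forall>b\<in>fcar S. fmul S a b \<in> fcar S) \<and>
     (\<forall>a\<in>fcar S. \<forall>b\<in>fcar S. \<forall>c\<in>fcar S. fmul S (fmul S a b) c = fmul S a (fmul S b c)) \<and>
     (\<forall>a\<in>fcar S. fmul S (fone S) a = a \<and> fmul S a (fone S) = a) \<and>
     (\<forall>a\<in>fcar S. finv S a \<in> fcar S \<and>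
        fmul S (fmul S a (finv S a)) a = a \<and> fmul S (fmul S (finv S a) a) (finv S a) = finv S a) \<and>
     (\<forall>a\<in>fcar S. \<forall>b\<in>fcar S. fmul S (fmul S a b) a = a \<and> fmul S (fmul S b a) b = b \<longrightarrow> b = finv S a)"

definition nle :: "('m, 'z) fsig_scheme \<Rightarrow> 'm \<Rightarrow> 'm \<Rightarrow> bool" where
  "nle S a b \<longleftrightarrow> (\<exists>e\<in>fcar S. fmul S e e = e \<and> a = fmul S e b)"

definition fsigma :: "('m, 'z) fsig_scheme \<Rightarrow> 'm \<Rightarrow> 'm \<Rightarrow> bool" where
  "fsigma S a b \<longleftrightarrow> (\<exists>c\<in>fcar S. nle S c a \<and> nle S c b)"

definition F_inverse :: "('m, 'z) fsig_scheme \<Rightarrow> bool" where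
  "F_inverse S \<longleftrightarrow> inv_monoid S \<and>
     (\<forall>a\<in>fcar S. fmx S a \<in> fcar S \<and> fsigma S a (fmx S a) \<and>
        (\<forall>b\<in>fcar S. fsigma S a b \<longrightarrow> nle S b (fmx S a)))"

definition fhom :: "('m \<Rightarrow> 'n) \<Rightarrow> ('m, 'z) fsig_scheme \<Rightarrow> ('n, 'y) fsig_scheme \<Rightarrow> bool" where
  "fhom \<phi> S T \<longleftrightarrow>
     (\<forall>a\<in>fcar S. \<forall>b\<in>fcar S. \<phi> (fmul S a b) = fmul T (\<phi> a) (\<phi> b)) \<and>
     \<phi> (fone S) = fone T \<and>
     (\<forall>a\<in>fcar S. \<phi> (finv S a) = finv T (\<phi> a)) \<and>
     (\<forall>a\<in>fcar S. \<phi> (fmx S a) = fmx T (\<phi> a))"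

section \<open>Words over X \<union> X^{-1}; (x,True) is x, (x,False) is x^{-1}\<close>

type_synonym 'a word = "('a \<times> bool) list"

definition wds :: "'a set \<Rightarrow> 'a word set" where
  "wds X = {w. fst ` set w \<subseteq> X}"

definition winv :: "'a word \<Rightarrow> 'a word" where
  "winv w = rev (map (\<lambda>(x, b). (x, \<not> b)) w)"

definition red :: "'a word \<Rightarrow> 'a word" where
  "red w = foldr (\<lambda>a acc. case acc of [] \<Rightarrow> [a]
      | b # r \<Rightarrow> (if fst a = fst b \<and> snd a \<noteq> snd b then r else a # acc)) w []"

inductive_set vagner :: "('a word \<times> 'a word) set" where
  v_refl: "(w, w) \<in> vagner"
| v_sym: "(u, v) \<in> vagner \<Longrightarrow> (v, u) \<in> vagner"
| v_trans: "(u, v) \<in> vagner \<Longrightarrow> (v, w) \<in> vagner \<Longrightarrow> (u, w) \<in> vagner"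
| v_cong: "(u, v) \<in> vagner \<Longrightarrow> (p @ u @ q, p @ v @ q) \<in> vagner"
| v_ax1: "(w @ winv w @ w, w) \<in> vagner"
| v_ax2: "(w @ winv w @ v @ winv v, v @ winv v @ w @ winv w) \<in> vagner"

definition vag :: "'a set \<Rightarrow> ('a word \<times> 'a word) set" where
  "vag X = vagner \<inter> (wds X \<times> wds X)"

definition FIM0 :: "'a set \<Rightarrow> 'a word set fsig" where
  "FIM0 X = \<lparr> fcar = wds X // vag X,
     fmul = (\<lambda>A B. vag X `` {(SOME a. a \<in> A) @ (SOME b. b \<in> B)}),
     fone = vag X `` {[]},
     finv = (\<lambda>A. vag X `` {winv (SOME a. a \<in> A)}),
     fmx = (\<lambda>A. undefined) \<rparr>"

definition FIM :: "'a set \<Rightarrow> 'a word set fsig" where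
  "FIM X = (FIM0 X) \<lparr> fmx := (\<lambda>A. THE B. B \<in> fcar (FIM0 X) \<and> fsigma (FIM0 X) A B \<and>
       (\<forall>C\<in>fcar (FIM0 X). fsigma (FIM0 X) A C \<longrightarrow> nle (FIM0 X) C B)) \<rparr>"

datatype 'a ftm = Gen 'a | Tone | Tmul "'a ftm" "'a ftm" | Tinv "'a ftm" | Tm "'a ftm"

fun gens :: "'a ftm \<Rightarrow> 'a set" where
  "gens (Gen x) = {x}"
| "gens Tone = {}"
| "gens (Tmul s t) = gens s \<union> gens t"
| "gens (Tinv t) = gens t"
| "gens (Tm t) = gens t"

definition tms :: "'a set \<Rightarrow> 'a ftm set" where
  "tms X = {t. gens t \<subseteq> X}"

fun word_tm :: "'a word \<Rightarrow> 'a ftm" where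
  "word_tm [] = Tone"
| "word_tm ((x, b) # w) = Tmul (if b then Gen x else Tinv (Gen x)) (word_tm w)"

definition fcong :: "'a ftm set \<Rightarrow> ('a ftm \<times> 'a ftm) set \<Rightarrow> bool" where
  "fcong T \<theta> \<longleftrightarrow> equiv T \<theta> \<and>
     (\<forall>a b c d. (a, b) \<in> \<theta> \<longrightarrow> (c, d) \<in> \<theta> \<longrightarrow> (Tmul a c, Tmul b d) \<in> \<theta>) \<and>
     (\<forall>a b. (a, b) \<in> \<theta> \<longrightarrow> (Tinv a, Tinv b) \<in> \<theta>) \<and>
     (\<forall>a b. (a, b) \<in> \<theta> \<longrightarrow> (Tm a, Tm b) \<in> \<theta>)"

definition quot :: "('a ftm \<times> 'a ftm) set \<Rightarrow> 'a ftm set \<Rightarrow> 'a ftm set fsig" where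
  "quot \<theta> T = \<lparr> fcar = T // \<theta>,
     fmul = (\<lambda>A B. \<theta> `` {Tmul (SOME a. a \<in> A) (SOME b. b \<in> B)}),
     fone = \<theta> `` {Tone},
     finv = (\<lambda>A. \<theta> `` {Tinv (SOME a. a \<in> A)}),
     fmx = (\<lambda>A. \<theta> `` {Tm (SOME a. a \<in> A)}) \<rparr>"

text \<open>The congruence on the term algebra whose quotient is FInv<X | R>: the least congruence
  containing R whose quotient is an F-inverse monoid. (The congruence giving the free
  F-inverse monoid is the case R = {}; this is the congruence generated by R on it.)\<close>
definition pres_cong :: "'a set \<Rightarrow> ('a ftm \<times> 'a ftm) set \<Rightarrow> ('a ftm \<times> 'a ftm) set" where
  "pres_cong X R = \<Inter> {\<theta>. fcong (tms X) \<theta> \<and> R \<subseteq> \<theta> \<and> F_inverse (quot \<theta> (tms X))}"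

definition FInv :: "'a set \<Rightarrow> ('a ftm \<times> 'a ftm) set \<Rightarrow> 'a ftm set fsig" where
  "FInv X R = quot (pres_cong X R) (tms X)"

definition red_rel :: "'a set \<Rightarrow> ('a ftm \<times> 'a ftm) set" where
  "red_rel X = {(word_tm (red w), Tm (word_tm w)) | w. w \<in> wds X}"

end

theory Submission
  imports Defs
begin

text \<open>
  Free reduction is invariant under the Vagner congruence, because reduced words carry an action
  of all words by letter cancellation in which the Vagner axioms hold. Moreover
  \<open>w \<approx> w w\<^sup>-\<^sup>1 red w\<close> with \<open>w w\<^sup>-\<^sup>1\<close> idempotent, so \<open>[w] \<le> [red w]\<close> in the natural order,
  while elements below each other have equal free reductions. Hence the \<open>\<sigma>\<close>-class of \<open>[w]\<close> has
  greatest element \<open>[red w]\<close>, and FIM(X) is F-inverse with \<open>[w]\<^sup>m = [red w]\<close>.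

  Interpreting terms as words, with \<open>m\<close> read as \<open>red\<close>, the kernel of this interpretation is a
  congruence containing the relations \<open>red w = w\<^sup>m\<close>, and its quotient is again a copy of FIM(X).
  It is the least congruence with an F-inverse quotient containing these relations: in any such
  quotient every term equals the value of its word, since each \<open>t\<^sup>m\<close> can be replaced by the
  reduced word of \<open>t\<close>, and evaluating words in an inverse monoid respects the Vagner axioms.
\<close>

abbreviation vagner_eq :: "'a word \<Rightarrow> 'a word \<Rightarrow> bool" (infix "\<approx>" 50) where
  "u \<approx> v \<equiv> (u, v) \<in> vagner"

declare v_trans[trans]

definition letter_inv :: "'a \<times> bool \<Rightarrow> 'a \<times> bool" where
  "letter_inv a = (fst a, \<not> snd a)"

lemma letter_inv_letter_inv[simp]: "letter_inv (letter_inv a) = a"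
  by (simp add: letter_inv_def)

lemma winv_Nil[simp]: "winv [] = []"
  by (simp add: winv_def)

lemma winv_Cons[simp]: "winv (a # w) = winv w @ [letter_inv a]"
  by (cases a) (simp add: winv_def letter_inv_def)

lemma winv_append[simp]: "winv (u @ v) = winv v @ winv u"
  by (simp add: winv_def)

lemma winv_winv[simp]: "winv (winv w) = w"
  by (induction w) auto

lemma wds_Nil[simp]: "[] \<in> wds X"
  by (simp add: wds_def)

lemma wds_Cons[simp]: "a # w \<in> wds X \<longleftrightarrow> fst a \<in> X \<and> w \<in> wds X"
  by (simp add: wds_def)

lemma wds_append[simp]: "u @ v \<in> wds X \<longleftrightarrow> u \<in> wds X \<and> v \<in> wds X"
  by (auto simp: wds_def)

lemma wds_winv[simp]: "winv w \<in> wds X \<longleftrightarrow> w \<in> wds X"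
  by (induction w) (auto simp: letter_inv_def)

lemma vagner_append_left: "u \<approx> v \<Longrightarrow> p @ u \<approx> p @ v"
  using v_cong[of u v p "[]"] by simp

lemma vagner_append_right: "u \<approx> v \<Longrightarrow> u @ q \<approx> v @ q"
  using v_cong[of u v "[]" q] by simp

lemma vagner_append: "u \<approx> u' \<Longrightarrow> v \<approx> v' \<Longrightarrow> u @ v \<approx> u' @ v'"
  by (meson v_trans vagner_append_left vagner_append_right)

lemma vagner_winv: "u \<approx> v \<Longrightarrow> winv u \<approx> winv v"
proof (induction rule: vagner.induct)
  case (v_cong u v p q)
  then show ?case using vagner.v_cong[of "winv u" "winv v" "winv q" "winv p"] by simp
next
  case (v_ax1 w)
  then show ?case using vagner.v_ax1[of "winv w"] by simp
next
  case (v_ax2 w v)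
  then show ?case using vagner.v_ax2[of v w] by simp
qed (auto intro: vagner.intros)

section \<open>Free reduction as a Vagner invariant\<close>

definition red_step :: "'a \<times> bool \<Rightarrow> 'a word \<Rightarrow> 'a word" where
  "red_step = (\<lambda>a acc. case acc of [] \<Rightarrow> [a]
      | b # r \<Rightarrow> (if fst a = fst b \<and> snd a \<noteq> snd b then r else a # acc))"

lemma red_foldr: "red w = foldr red_step w []"
  by (simp add: red_def red_step_def)

lemma red_append: "red (u @ v) = foldr red_step u (red v)"
  by (simp add: red_foldr)

fun reduced :: "'a word \<Rightarrow> bool" where
  "reduced (a # b # r) \<longleftrightarrow> \<not> (fst a = fst b \<and> snd a \<noteq> snd b) \<and> reduced (b # r)"
| "reduced _ \<longleftrightarrow> True"

lemma reduced_tl: "reduced (b # r) \<Longrightarrow> reduced r"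
  by (cases r) auto

lemma reduced_red_step: "reduced r \<Longrightarrow> reduced (red_step a r)"
  by (cases r) (auto simp: red_step_def dest: reduced_tl)

lemma reduced_foldr_red_step: "reduced r \<Longrightarrow> reduced (foldr red_step u r)"
  by (induction u) (auto intro: reduced_red_step)

lemma reduced_red: "reduced (red w)"
  by (simp add: red_foldr reduced_foldr_red_step)

lemma red_step_letter_inv:
  assumes "reduced r" shows "red_step a (red_step (letter_inv a) r) = r"
proof (cases r)
  case (Cons b r')
  show ?thesis
  proof (cases "fst (letter_inv a) = fst b \<and> snd (letter_inv a) \<noteq> snd b")
    case True
    then have "b = a" by (cases a; cases b) (auto simp: letter_inv_def)
    with Cons True assms show ?thesis
      by (cases r') (simp_all add: red_step_def)
  next
    case False
    then have "red_step (letter_inv a) r = letter_inv a # r"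
      using Cons by (simp add: red_step_def)
    then show ?thesis by (simp add: red_step_def letter_inv_def)
  qed
qed (simp add: red_step_def letter_inv_def)

lemma foldr_red_step_cancel: "reduced r \<Longrightarrow> foldr red_step u (foldr red_step (winv u) r) = r"
proof (induction u arbitrary: r)
  case (Cons a u)
  have "foldr red_step (a # u) (foldr red_step (winv (a # u)) r)
      = red_step a (foldr red_step u (foldr red_step (winv u) (red_step (letter_inv a) r)))"
    by simp
  also have "\<dots> = red_step a (red_step (letter_inv a) r)"
    using Cons by (simp add: reduced_red_step)
  also have "\<dots> = r"
    using Cons.prems by (rule red_step_letter_inv)
  finally show ?case .
qed simp

lemma vagner_foldr_red_step:
  "u \<approx> v \<Longrightarrow> reduced r \<Longrightarrow> foldr red_step u r = foldr red_step v r"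
proof (induction arbitrary: r rule: vagner.induct)
  case (v_cong u v p q)
  then show ?case by (simp add: reduced_foldr_red_step)
next
  case (v_ax1 w)
  then show ?case using foldr_red_step_cancel[of r "winv w"] by simp
next
  case (v_ax2 w v)
  then show ?case using foldr_red_step_cancel[of r v] foldr_red_step_cancel[of r w] by simp
qed auto

lemma vagner_red: "u \<approx> v \<Longrightarrow> red u = red v"
  by (simp add: red_foldr vagner_foldr_red_step)

lemma set_foldr_red_step: "set (foldr red_step u r) \<subseteq> set u \<union> set r"
proof (induction u)
  case (Cons a u)
  then show ?case by (cases "foldr red_step u r") (auto simp: red_step_def split: if_splits)
qed simp

lemma wds_red[simp]: "w \<in> wds X \<Longrightarrow> red w \<in> wds X"
  using set_foldr_red_step[of w "[]"] by (auto simp: wds_def red_foldr)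

lemma vagner_below_red: "w \<approx> w @ winv w @ red w"
proof (induction w)
  case Nil
  then show ?case by (simp add: red_foldr v_refl)
next
  case (Cons a w)
  show ?case
  proof (cases "\<exists>r. red w = letter_inv a # r")
    case True
    then obtain r where r: "red w = letter_inv a # r" by blast
    have "red (a # w) = r"
      using r by (simp add: red_foldr red_step_def letter_inv_def)
    then have "(a # w) @ winv (a # w) @ red (a # w) = [a] @ (w @ winv w @ red w)"
      using r by simp
    then show ?thesis using vagner_append_left[OF Cons, of "[a]"] by simp
  next
    case False
    then have red_Cons: "red (a # w) = a # red w"
      by (cases "red w") (auto simp: red_foldr red_step_def letter_inv_def prod_eq_iff)
    let ?e = "[letter_inv a] @ winv [letter_inv a]"
    have "a # w \<approx> [a] @ (w @ winv w @ red w)"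
      using vagner_append_left[OF Cons, of "[a]"] by simp
    also have "[a] @ (w @ winv w @ red w) \<approx> [a] @ ?e @ (w @ winv w) @ red w"
      using vagner_append_right[OF v_sym[OF v_ax1[of "[a]"]]] by simp
    also have "[a] @ ?e @ (w @ winv w) @ red w \<approx> [a] @ (w @ winv w) @ ?e @ red w"
      using v_cong[OF v_ax2[of "[letter_inv a]" w], of "[a]" "red w"] by simp
    also have "[a] @ (w @ winv w) @ ?e @ red w = (a # w) @ winv (a # w) @ red (a # w)"
      by (simp add: red_Cons)
    finally show ?thesis .
  qed
qed

lemma vagner_proj_idem: "(w @ winv w) @ (w @ winv w) \<approx> w @ winv w"
  using vagner_append_right[OF v_ax1[of w], of "winv w"] by simp

lemma vagner_winv_ax1: "winv w @ w @ winv w \<approx> winv w"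
  using v_ax1[of "winv w"] by simp

lemma vagner_idem_winv:
  assumes "y @ y \<approx> y" shows "y \<approx> winv y"
proof -
  have "winv y \<approx> winv y @ y @ winv y"
    using v_sym[OF vagner_winv_ax1[of y]] .
  also have "winv y @ y @ winv y \<approx> winv y @ (y @ y) @ winv y"
    using v_cong[OF v_sym[OF assms]] .
  also have "winv y @ (y @ y) @ winv y = (winv y @ y) @ (y @ winv y)"
    by simp
  also have "(winv y @ y) @ (y @ winv y) \<approx> (y @ winv y) @ (winv y @ y)"
    using v_ax2[of "winv y" y] by simp
  also have "(y @ winv y) @ (winv y @ y) = y @ winv (y @ y) @ y"
    by simp
  also have "y @ winv (y @ y) @ y \<approx> y @ winv y @ y"
    using v_cong[OF vagner_winv[OF assms]] .
  also have "y @ winv y @ y \<approx> y"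
    by (rule v_ax1)
  finally show ?thesis by (rule v_sym)
qed

lemma vagner_idem_proj: "y @ y \<approx> y \<Longrightarrow> y \<approx> y @ winv y"
  by (meson v_sym v_trans vagner_append_left vagner_idem_winv)

lemma vagner_idem_comm:
  assumes "y @ y \<approx> y" "z @ z \<approx> z" shows "y @ z \<approx> z @ y"
proof -
  have "y @ z \<approx> (y @ winv y) @ (z @ winv z)"
    using vagner_append[OF vagner_idem_proj vagner_idem_proj] assms .
  also have "(y @ winv y) @ (z @ winv z) \<approx> (z @ winv z) @ (y @ winv y)"
    using v_ax2[of y z] by simp
  also have "(z @ winv z) @ (y @ winv y) \<approx> z @ y"
    using vagner_append[OF vagner_idem_proj vagner_idem_proj] assms by (blast intro: v_sym)
  finally show ?thesis .
qed

lemma vagner_inverse_unique: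
  assumes a: "u @ v @ u \<approx> u" and b: "v @ u @ v \<approx> v" shows "v \<approx> winv u"
proof -
  have uv: "(u @ v) @ (u @ v) \<approx> u @ v" using vagner_append_right[OF a, of v] by simp
  have vu: "(v @ u) @ (v @ u) \<approx> v @ u" using vagner_append_right[OF b, of u] by simp
  have u'u: "(winv u @ u) @ (winv u @ u) \<approx> winv u @ u" using vagner_proj_idem[of "winv u"] by simp
  have "v \<approx> v @ (u @ winv u @ u) @ v"
    using v_sym[OF b] v_cong[OF v_sym[OF v_ax1[of u]], of v v] by (blast intro: v_trans)
  also have "v @ (u @ winv u @ u) @ v = ((v @ u) @ (winv u @ u)) @ v"
    by simp
  also have "((v @ u) @ (winv u @ u)) @ v \<approx> ((winv u @ u) @ (v @ u)) @ v"
    using vagner_append_right[OF vagner_idem_comm[OF vu u'u]] .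
  also have "((winv u @ u) @ (v @ u)) @ v = winv u @ (u @ v @ u) @ v"
    by simp
  also have "winv u @ (u @ v @ u) @ v \<approx> winv u @ u @ v"
    using v_cong[OF a] by simp
  finally have v: "v \<approx> winv u @ u @ v" .
  have "winv u \<approx> winv u @ (u @ v @ u) @ winv u"
    using v_sym[OF vagner_winv_ax1[of u]] v_cong[OF v_sym[OF a], of "winv u" "winv u"]
    by (blast intro: v_trans)
  also have "winv u @ (u @ v @ u) @ winv u = winv u @ ((u @ v) @ (u @ winv u))"
    by simp
  also have "winv u @ ((u @ v) @ (u @ winv u)) \<approx> winv u @ ((u @ winv u) @ (u @ v))"
    using vagner_append_left[OF vagner_idem_comm[OF uv vagner_proj_idem]] .
  also have "winv u @ ((u @ winv u) @ (u @ v)) = (winv u @ u @ winv u) @ u @ v"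
    by simp
  also have "(winv u @ u @ winv u) @ u @ v \<approx> winv u @ u @ v"
    using vagner_append_right[OF vagner_winv_ax1[of u]] by simp
  finally show ?thesis using v by (blast intro: v_sym v_trans)
qed

lemma vagner_antisym:
  assumes y: "y @ y \<approx> y" and y': "y' @ y' \<approx> y'"
    and z: "z \<approx> y @ v" and v: "v \<approx> y' @ z"
  shows "z \<approx> v"
proof -
  have "y @ z \<approx> (y @ y) @ v"
    using vagner_append_left[OF z] by simp
  also have "(y @ y) @ v \<approx> z"
    using vagner_append_right[OF y] v_sym[OF z] by (blast intro: v_trans)
  finally have yz: "y @ z \<approx> z" .
  have "v \<approx> y' @ y @ z"
    using v vagner_append_left[OF v_sym[OF yz]] by (blast intro: v_trans)
  also have "y' @ y @ z \<approx> y @ y' @ z"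
    using vagner_append_right[OF vagner_idem_comm[OF y' y]] by simp
  also have "y @ y' @ z \<approx> z"
    using vagner_append_left[OF v_sym[OF v]] v_sym[OF z] by (blast intro: v_trans)
  finally show ?thesis by (rule v_sym)
qed

lemma red_idem_append:
  assumes "y @ y \<approx> y" shows "red (y @ v) = red v"
proof -
  have "red (y @ v) = red ((y @ winv y) @ v)"
    using vagner_red[OF vagner_append_right[OF vagner_idem_proj[OF assms]]] .
  also have "red ((y @ winv y) @ v) = red v"
    by (simp add: red_append foldr_red_step_cancel reduced_red)
  finally show ?thesis .
qed

section \<open>Quotients of words by the Vagner congruence\<close>

locale vagner_quotient =
  fixes S :: "('m, 'z) fsig_scheme" and q :: "'a word \<Rightarrow> 'm" and X :: "'a set"
  assumes car: "fcar S = q ` wds X"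
    and mul: "u \<in> wds X \<Longrightarrow> v \<in> wds X \<Longrightarrow> fmul S (q u) (q v) = q (u @ v)"
    and one: "fone S = q []"
    and inv: "u \<in> wds X \<Longrightarrow> finv S (q u) = q (winv u)"
    and eq_iff: "u \<in> wds X \<Longrightarrow> v \<in> wds X \<Longrightarrow> q u = q v \<longleftrightarrow> u \<approx> v"
begin

lemma carE:
  assumes "a \<in> fcar S" obtains u where "u \<in> wds X" "a = q u"
  using assms car by blast

lemma q_in_car[simp]: "u \<in> wds X \<Longrightarrow> q u \<in> fcar S"
  using car by blast

lemma inv_monoid: "inv_monoid S"
proof -
  have closed: "\<forall>a\<in>fcar S. \<forall>b\<in>fcar S. fmul S a b \<in> fcar S"
    and assoc: "\<forall>a\<in>fcar S. \<forall>b\<in>fcar S. \<forall>c\<in>fcar S. fmul S (fmul S a b) c = fmul S a (fmul S b c)"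
    and unit: "\<forall>a\<in>fcar S. fmul S (fone S) a = a \<and> fmul S a (fone S) = a"
    by (auto elim!: carE simp: mul one)
  have inverse: "\<forall>a\<in>fcar S. finv S a \<in> fcar S \<and> fmul S (fmul S a (finv S a)) a = a \<and>
      fmul S (fmul S (finv S a) a) (finv S a) = finv S a"
    using v_ax1 vagner_winv_ax1 by (auto elim!: carE simp: mul inv eq_iff)
  have unique: "\<forall>a\<in>fcar S. \<forall>b\<in>fcar S.
      fmul S (fmul S a b) a = a \<and> fmul S (fmul S b a) b = b \<longrightarrow> b = finv S a"
    using vagner_inverse_unique by (auto elim!: carE simp: mul inv eq_iff)
  have "fone S \<in> fcar S"
    by (simp add: one)
  then show ?thesis
    unfolding inv_monoid_def using closed assoc unit inverse unique by blast
qed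

lemma nle_iff:
  assumes "u \<in> wds X" "v \<in> wds X"
  shows "nle S (q u) (q v) \<longleftrightarrow> (\<exists>y\<in>wds X. y @ y \<approx> y \<and> u \<approx> y @ v)"
proof
  assume "nle S (q u) (q v)"
  then obtain y where "y \<in> wds X" "fmul S (q y) (q y) = q y" "q u = fmul S (q y) (q v)"
    unfolding nle_def by (auto elim!: carE)
  then show "\<exists>y\<in>wds X. y @ y \<approx> y \<and> u \<approx> y @ v"
    using assms by (auto simp: mul eq_iff)
next
  assume "\<exists>y\<in>wds X. y @ y \<approx> y \<and> u \<approx> y @ v"
  then obtain y where "y \<in> wds X" "y @ y \<approx> y" "u \<approx> y @ v"
    by blast
  then show "nle S (q u) (q v)"
    unfolding nle_def using assms by (auto simp: mul eq_iff intro!: bexI[of _ "q y"])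
qed

lemma nle_refl: "u \<in> wds X \<Longrightarrow> nle S (q u) (q u)"
  using v_refl[of u] v_refl[of "[]"] by (subst nle_iff) (auto intro!: bexI[of _ "[]"])

lemma nle_red: "u \<in> wds X \<Longrightarrow> nle S (q u) (q (red u))"
  using vagner_proj_idem[of u] vagner_below_red[of u]
  by (subst nle_iff) (auto intro!: bexI[of _ "u @ winv u"])

lemma red_eq_if_nle:
  assumes "u \<in> wds X" "v \<in> wds X" "nle S (q u) (q v)" shows "red u = red v"
proof -
  obtain y where "y @ y \<approx> y" "u \<approx> y @ v"
    using assms nle_iff by blast
  then show ?thesis
    using vagner_red red_idem_append by metis
qed

lemma fsigma_red: "u \<in> wds X \<Longrightarrow> fsigma S (q u) (q (red u))"
  unfolding fsigma_def using nle_refl nle_red q_in_car by blast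

lemma nle_red_if_fsigma:
  assumes "u \<in> wds X" "b \<in> fcar S" "fsigma S (q u) b" shows "nle S b (q (red u))"
proof -
  obtain v where v: "v \<in> wds X" "b = q v"
    using assms(2) by (rule carE)
  obtain c where c: "c \<in> fcar S" "nle S c (q u)" "nle S c (q v)"
    using assms(3) v unfolding fsigma_def by blast
  obtain w where "w \<in> wds X" "c = q w"
    using c(1) by (rule carE)
  then have "red v = red u"
    using c assms(1) v(1) red_eq_if_nle by metis
  then show ?thesis
    using nle_red[OF v(1)] v(2) by simp
qed

lemma nle_antisym:
  assumes "a \<in> fcar S" "b \<in> fcar S" "nle S a b" "nle S b a" shows "a = b"
proof -
  obtain u v where u: "u \<in> wds X" "a = q u" and v: "v \<in> wds X" "b = q v"
    using assms(1,2) by (meson carE)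
  obtain y y' where "y @ y \<approx> y" "y' @ y' \<approx> y'" "u \<approx> y @ v" "v \<approx> y' @ u"
    using assms(3,4) u v nle_iff by metis
  then have "u \<approx> v"
    by (rule vagner_antisym)
  then show ?thesis
    using u v eq_iff by simp
qed

lemma greatest_in_fsigma_class:
  assumes "u \<in> wds X"
  shows "(THE b. b \<in> fcar S \<and> fsigma S (q u) b \<and> (\<forall>c\<in>fcar S. fsigma S (q u) c \<longrightarrow> nle S c b))
    = q (red u)"
proof (rule the_equality)
  show "q (red u) \<in> fcar S \<and> fsigma S (q u) (q (red u)) \<and>
      (\<forall>c\<in>fcar S. fsigma S (q u) c \<longrightarrow> nle S c (q (red u)))"
    using assms fsigma_red nle_red_if_fsigma by simp
next
  fix b assume "b \<in> fcar S \<and> fsigma S (q u) b \<and> (\<forall>c\<in>fcar S. fsigma S (q u) c \<longrightarrow> nle S c b)"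
  then show "b = q (red u)"
    using assms fsigma_red nle_red_if_fsigma nle_antisym by simp
qed

end

locale vagner_F_quotient = vagner_quotient +
  assumes mx: "u \<in> wds X \<Longrightarrow> fmx S (q u) = q (red u)"
begin

lemma F_inverse: "F_inverse S"
  unfolding F_inverse_def
  using inv_monoid fsigma_red nle_red_if_fsigma by (auto elim!: carE simp: mx)

end

lemma vagner_F_quotient_iso:
  assumes "vagner_F_quotient S q X" and "vagner_F_quotient T p X"
  shows "\<exists>\<phi>. bij_betw \<phi> (fcar S) (fcar T) \<and> fhom \<phi> S T \<and> (\<forall>u\<in>wds X. \<phi> (q u) = p u)"
proof -
  interpret S: vagner_F_quotient S q X by fact
  interpret T: vagner_F_quotient T p X by fact
  define \<phi> where "\<phi> a = p (SOME u. u \<in> wds X \<and> a = q u)" for a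
  have \<phi>_q: "\<phi> (q u) = p u" if u: "u \<in> wds X" for u
  proof -
    define v where "v = (SOME v. v \<in> wds X \<and> q u = q v)"
    have "v \<in> wds X \<and> q u = q v"
      unfolding v_def using u by (metis (mono_tags, lifting) someI)
    then have "p v = p u"
      using u S.eq_iff T.eq_iff v_sym by metis
    then show ?thesis
      by (simp add: \<phi>_def v_def)
  qed
  have "inj_on \<phi> (fcar S)"
    by (rule inj_onI) (auto elim!: S.carE simp: \<phi>_q S.eq_iff T.eq_iff)
  moreover have "\<phi> ` fcar S = fcar T"
    by (simp add: S.car T.car image_image \<phi>_q cong: image_cong)
  moreover have "fhom \<phi> S T"
    unfolding fhom_def
    by (auto elim!: S.carE simp: \<phi>_q S.mul T.mul S.one T.one S.inv T.inv S.mx T.mx)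
  ultimately show ?thesis
    using \<phi>_q by (auto simp: bij_betw_def)
qed

section \<open>Inverse monoids\<close>

locale inverse_monoid =
  fixes S :: "('m, 'z) fsig_scheme"
  assumes inv_monoid: "inv_monoid S"
begin

abbreviation mult :: "'m \<Rightarrow> 'm \<Rightarrow> 'm" (infixl "\<odot>" 70) where
  "a \<odot> b \<equiv> fmul S a b"

abbreviation iv :: "'m \<Rightarrow> 'm" where
  "iv a \<equiv> finv S a"

lemma one_closed[simp]: "fone S \<in> fcar S"
  using inv_monoid by (simp add: inv_monoid_def)

lemma mult_closed[simp]: "a \<in> fcar S \<Longrightarrow> b \<in> fcar S \<Longrightarrow> a \<odot> b \<in> fcar S"
  using inv_monoid by (simp add: inv_monoid_def)

lemma inv_closed[simp]: "a \<in> fcar S \<Longrightarrow> iv a \<in> fcar S"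
  using inv_monoid by (simp add: inv_monoid_def)

lemma assoc: "a \<in> fcar S \<Longrightarrow> b \<in> fcar S \<Longrightarrow> c \<in> fcar S \<Longrightarrow> a \<odot> b \<odot> c = a \<odot> (b \<odot> c)"
  using inv_monoid by (simp add: inv_monoid_def)

lemma left_unit[simp]: "a \<in> fcar S \<Longrightarrow> fone S \<odot> a = a"
  using inv_monoid by (simp add: inv_monoid_def)

lemma right_unit[simp]: "a \<in> fcar S \<Longrightarrow> a \<odot> fone S = a"
  using inv_monoid by (simp add: inv_monoid_def)

lemma mult_inv_mult: "a \<in> fcar S \<Longrightarrow> a \<odot> (iv a \<odot> a) = a"
  using inv_monoid by (simp add: inv_monoid_def assoc)

lemma inv_mult_inv: "a \<in> fcar S \<Longrightarrow> iv a \<odot> (a \<odot> iv a) = iv a"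
  using inv_monoid by (simp add: inv_monoid_def assoc)

lemma inverse_unique:
  "a \<in> fcar S \<Longrightarrow> b \<in> fcar S \<Longrightarrow> a \<odot> (b \<odot> a) = a \<Longrightarrow> b \<odot> (a \<odot> b) = b \<Longrightarrow> b = iv a"
  using inv_monoid unfolding inv_monoid_def by (metis assoc)

lemma mult_inv_mult_left: "a \<in> fcar S \<Longrightarrow> x \<in> fcar S \<Longrightarrow> a \<odot> (iv a \<odot> (a \<odot> x)) = a \<odot> x"
  by (metis assoc inv_closed mult_closed mult_inv_mult)

lemma inv_mult_inv_left: "a \<in> fcar S \<Longrightarrow> x \<in> fcar S \<Longrightarrow> iv a \<odot> (a \<odot> (iv a \<odot> x)) = iv a \<odot> x"
  by (metis assoc inv_closed mult_closed inv_mult_inv)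

lemma inv_inv[simp]: "a \<in> fcar S \<Longrightarrow> iv (iv a) = a"
  using inverse_unique[of "iv a" a] mult_inv_mult[of a] inv_mult_inv[of a] by simp

lemma idem_left: "e \<in> fcar S \<Longrightarrow> e \<odot> e = e \<Longrightarrow> x \<in> fcar S \<Longrightarrow> e \<odot> (e \<odot> x) = e \<odot> x"
  by (simp add: assoc[symmetric])

lemma idem_inv: "e \<in> fcar S \<Longrightarrow> e \<odot> e = e \<Longrightarrow> iv e = e"
  using inverse_unique[of e e] by (simp add: idem_left)

lemma idem_mult_idem:
  assumes e: "e \<in> fcar S" "e \<odot> e = e" and f: "f \<in> fcar S" "f \<odot> f = f"
  shows "e \<odot> f \<odot> (e \<odot> f) = e \<odot> f"
proof -
  define a where "a = e \<odot> f"
  define b where "b = f \<odot> (iv a \<odot> e)"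
  have a: "a \<in> fcar S" and b: "b \<in> fcar S"
    using e f by (simp_all add: a_def b_def)
  have a_b_a: "a \<odot> (b \<odot> a) = a"
    using e f mult_inv_mult[OF a] by (simp add: a_def b_def assoc idem_left)
  have iv_a: "iv a \<odot> (e \<odot> (f \<odot> (iv a \<odot> x))) = iv a \<odot> x" if "x \<in> fcar S" for x
    using inv_mult_inv_left[OF a that] e f that by (simp add: a_def assoc)
  have b_a_b: "b \<odot> (a \<odot> b) = b" and b_b: "b \<odot> b = b"
    using e f by (simp_all add: b_def a_def assoc idem_left iv_a[unfolded a_def])
  have "b = iv a"
    using inverse_unique[OF a b a_b_a b_a_b] .
  then have "a = iv b"
    using a by simp
  also have "\<dots> = b"
    using idem_inv[OF b b_b] .
  finally show ?thesis
    using b_b by (simp add: a_def)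
qed

lemma idem_comm:
  assumes e: "e \<in> fcar S" "e \<odot> e = e" and f: "f \<in> fcar S" "f \<odot> f = f"
  shows "e \<odot> f = f \<odot> e"
proof -
  have ef: "e \<odot> (f \<odot> (e \<odot> f)) = e \<odot> f" and fe: "f \<odot> (e \<odot> (f \<odot> e)) = f \<odot> e"
    using idem_mult_idem[OF e f] idem_mult_idem[OF f e] e f by (simp_all add: assoc)
  have "f \<odot> e = iv (e \<odot> f)"
    using ef fe e f by (intro inverse_unique) (simp_all add: assoc idem_left)
  also have "\<dots> = e \<odot> f"
    using idem_inv idem_mult_idem[OF e f] e f by simp
  finally show ?thesis by simp
qed

lemma mult_inv_idem: "a \<in> fcar S \<Longrightarrow> a \<odot> iv a \<odot> (a \<odot> iv a) = a \<odot> iv a"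
  by (simp add: assoc mult_inv_mult_left)

lemma inv_mult:
  assumes a: "a \<in> fcar S" and b: "b \<in> fcar S"
  shows "iv (a \<odot> b) = iv b \<odot> iv a"
proof -
  have comm: "b \<odot> (iv b \<odot> (iv a \<odot> (a \<odot> x))) = iv a \<odot> (a \<odot> (b \<odot> (iv b \<odot> x)))"
    if "x \<in> fcar S" for x
  proof -
    have "b \<odot> iv b \<odot> (iv a \<odot> a) = iv a \<odot> a \<odot> (b \<odot> iv b)"
      using idem_comm[OF _ mult_inv_idem[OF b] _ mult_inv_idem[OF inv_closed[OF a]]] a b by simp
    then have "b \<odot> iv b \<odot> (iv a \<odot> a) \<odot> x = iv a \<odot> a \<odot> (b \<odot> iv b) \<odot> x"
      by simp
    then show ?thesis
      using a b that by (simp add: assoc)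
  qed
  have "a \<odot> b \<odot> (iv b \<odot> iv a \<odot> (a \<odot> b)) = a \<odot> b"
    using a b comm[of b] by (simp add: assoc mult_inv_mult_left mult_inv_mult)
  moreover have "iv b \<odot> iv a \<odot> (a \<odot> b \<odot> (iv b \<odot> iv a)) = iv b \<odot> iv a"
    using a b comm[of "iv a"] by (simp add: assoc inv_mult_inv_left inv_mult_inv)
  ultimately show ?thesis
    using a b by (intro inverse_unique[symmetric]) simp_all
qed

lemma inv_one[simp]: "iv (fone S) = fone S"
  by (simp add: idem_inv)

end

primrec weval :: "('m, 'z) fsig_scheme \<Rightarrow> ('a \<times> bool \<Rightarrow> 'm) \<Rightarrow> 'a word \<Rightarrow> 'm" where
  "weval S f [] = fone S"
| "weval S f (a # w) = fmul S (f a) (weval S f w)"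

context inverse_monoid
begin

context
  fixes f :: "'a \<times> bool \<Rightarrow> 'm"
  assumes f_closed: "\<And>a. f a \<in> fcar S"
    and f_letter_inv: "\<And>a. f (letter_inv a) = iv (f a)"
begin

lemma weval_closed[simp]: "weval S f w \<in> fcar S"
  by (induction w) (simp_all add: f_closed)

lemma weval_append: "weval S f (u @ v) = weval S f u \<odot> weval S f v"
  by (induction u) (simp_all add: f_closed assoc)

lemma weval_winv: "weval S f (winv w) = iv (weval S f w)"
  by (induction w) (simp_all add: weval_append f_closed f_letter_inv inv_mult)

lemma weval_vagner: "u \<approx> v \<Longrightarrow> weval S f u = weval S f v"
proof (induction rule: vagner.induct)
  case (v_cong u v p q)
  then show ?case by (simp add: weval_append)
next
  case (v_ax1 w)
  then show ?case by (simp add: weval_append weval_winv mult_inv_mult)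
next
  case (v_ax2 w v)
  then show ?case
    using idem_comm[OF _ mult_inv_idem _ mult_inv_idem, of "weval S f w" "weval S f v"]
    by (simp add: weval_append weval_winv assoc[symmetric])
qed simp_all

end

end

fun word_of_tm :: "'a ftm \<Rightarrow> 'a word" where
  "word_of_tm (Gen x) = [(x, True)]"
| "word_of_tm Tone = []"
| "word_of_tm (Tmul s t) = word_of_tm s @ word_of_tm t"
| "word_of_tm (Tinv t) = winv (word_of_tm t)"
| "word_of_tm (Tm t) = red (word_of_tm t)"

lemma word_of_tm_word_tm[simp]: "word_of_tm (word_tm w) = w"
  by (induction w rule: word_tm.induct) (auto simp: letter_inv_def)

lemma tms_simps[simp]:
  "Gen x \<in> tms X \<longleftrightarrow> x \<in> X" "Tone \<in> tms X"
  "Tmul s t \<in> tms X \<longleftrightarrow> s \<in> tms X \<and> t \<in> tms X"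
  "Tinv t \<in> tms X \<longleftrightarrow> t \<in> tms X" "Tm t \<in> tms X \<longleftrightarrow> t \<in> tms X"
  by (auto simp: tms_def)

lemma word_tm_in_tms[simp]: "word_tm w \<in> tms X \<longleftrightarrow> w \<in> wds X"
  by (induction w rule: word_tm.induct) auto

lemma word_of_tm_in_wds: "t \<in> tms X \<Longrightarrow> word_of_tm t \<in> wds X"
  by (induction t) auto

lemma some_in_class: "equiv T \<theta> \<Longrightarrow> a \<in> T \<Longrightarrow> (a, SOME b. b \<in> \<theta> `` {a}) \<in> \<theta>"
  using someI[of "\<lambda>b. b \<in> \<theta> `` {a}", OF equiv_class_self] by blast

lemma fcong_equiv: "fcong T \<theta> \<Longrightarrow> equiv T \<theta>"
  by (simp add: fcong_def)

lemma quot_car: "fcar (quot \<theta> T) = T // \<theta>"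
  by (simp add: quot_def)

lemma quot_one: "fone (quot \<theta> T) = \<theta> `` {Tone}"
  by (simp add: quot_def)

lemma quot_mul:
  assumes "fcong T \<theta>" "a \<in> T" "b \<in> T"
  shows "fmul (quot \<theta> T) (\<theta> `` {a}) (\<theta> `` {b}) = \<theta> `` {Tmul a b}"
proof -
  have "(Tmul a b, Tmul (SOME a'. a' \<in> \<theta> `` {a}) (SOME b'. b' \<in> \<theta> `` {b})) \<in> \<theta>"
    using assms(1) some_in_class[OF fcong_equiv[OF assms(1)] assms(2)]
      some_in_class[OF fcong_equiv[OF assms(1)] assms(3)]
    unfolding fcong_def by blast
  then show ?thesis
    using equiv_class_eq[OF fcong_equiv[OF assms(1)]] by (simp add: quot_def)
qed

lemma quot_inv:
  assumes "fcong T \<theta>" "a \<in> T"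
  shows "finv (quot \<theta> T) (\<theta> `` {a}) = \<theta> `` {Tinv a}"
proof -
  have "(Tinv a, Tinv (SOME a'. a' \<in> \<theta> `` {a})) \<in> \<theta>"
    using assms(1) some_in_class[OF fcong_equiv[OF assms(1)] assms(2)]
    unfolding fcong_def by blast
  then show ?thesis
    using equiv_class_eq[OF fcong_equiv[OF assms(1)]] by (simp add: quot_def)
qed

lemma quot_mx:
  assumes "fcong T \<theta>" "a \<in> T"
  shows "fmx (quot \<theta> T) (\<theta> `` {a}) = \<theta> `` {Tm a}"
proof -
  have "(Tm a, Tm (SOME a'. a' \<in> \<theta> `` {a})) \<in> \<theta>"
    using assms(1) some_in_class[OF fcong_equiv[OF assms(1)] assms(2)]
    unfolding fcong_def by blast
  then show ?thesis
    using equiv_class_eq[OF fcong_equiv[OF assms(1)]] by (simp add: quot_def)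
qed

definition word_kernel :: "'a set \<Rightarrow> ('a ftm \<times> 'a ftm) set" where
  "word_kernel X = {(s, t). s \<in> tms X \<and> t \<in> tms X \<and> word_of_tm s \<approx> word_of_tm t}"

lemma word_kernel_equiv: "equiv (tms X) (word_kernel X)"
  by (rule equivI)
    (auto simp: word_kernel_def refl_on_def sym_def trans_def intro: v_refl v_sym v_trans)

lemma word_kernel_iff:
  "(s, t) \<in> word_kernel X \<longleftrightarrow> s \<in> tms X \<and> t \<in> tms X \<and> word_of_tm s \<approx> word_of_tm t"
  by (simp add: word_kernel_def)

lemma word_kernel_fcong: "fcong (tms X) (word_kernel X)"
  unfolding fcong_def word_kernel_iff
  by (auto simp: word_kernel_equiv vagner_red v_refl intro: vagner_append vagner_winv)

lemma red_rel_subset_word_kernel: "red_rel X \<subseteq> word_kernel X"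
  by (auto simp: red_rel_def word_kernel_def intro: v_refl)

lemma word_kernel_class_eq:
  "s \<in> tms X \<Longrightarrow> t \<in> tms X \<Longrightarrow>
    word_kernel X `` {s} = word_kernel X `` {t} \<longleftrightarrow> word_of_tm s \<approx> word_of_tm t"
  using equiv_class_eq_iff[OF word_kernel_equiv, of s t X] by (simp add: word_kernel_iff)

lemma quotient_word_kernel: "tms X // word_kernel X = (\<lambda>u. word_kernel X `` {word_tm u}) ` wds X"
proof (intro equalityI subsetI)
  fix A assume "A \<in> tms X // word_kernel X"
  then obtain t where t: "t \<in> tms X" "A = word_kernel X `` {t}"
    by (rule quotientE)
  then have "A = word_kernel X `` {word_tm (word_of_tm t)}"
    by (simp add: word_kernel_class_eq word_of_tm_in_wds v_refl)
  then show "A \<in> (\<lambda>u. word_kernel X `` {word_tm u}) ` wds X"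
    using t word_of_tm_in_wds by blast
next
  fix A assume "A \<in> (\<lambda>u. word_kernel X `` {word_tm u}) ` wds X"
  then obtain u where "u \<in> wds X" "A = word_kernel X `` {word_tm u}"
    by blast
  then show "A \<in> tms X // word_kernel X"
    by (simp add: quotientI)
qed

lemma quot_word_kernel:
  "vagner_F_quotient (quot (word_kernel X) (tms X)) (\<lambda>u. word_kernel X `` {word_tm u}) X"
proof unfold_locales
  let ?Q = "quot (word_kernel X) (tms X)" and ?c = "\<lambda>u. word_kernel X `` {word_tm u}"
  show "fcar ?Q = ?c ` wds X"
    by (simp add: quot_car quotient_word_kernel)
  fix u v :: "'a word"
  assume u: "u \<in> wds X" and v: "v \<in> wds X"
  show "fmul ?Q (?c u) (?c v) = ?c (u @ v)"
    using u v by (simp add: quot_mul word_kernel_fcong word_kernel_class_eq v_refl)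
  show "finv ?Q (?c u) = ?c (winv u)"
    using u by (simp add: quot_inv word_kernel_fcong word_kernel_class_eq v_refl)
  show "fmx ?Q (?c u) = ?c (red u)"
    using u by (simp add: quot_mx word_kernel_fcong word_kernel_class_eq v_refl)
  show "?c u = ?c v \<longleftrightarrow> u \<approx> v"
    using u v by (simp add: word_kernel_class_eq)
qed (simp add: quot_one)

lemma vag_iff: "(u, v) \<in> vag X \<longleftrightarrow> u \<in> wds X \<and> v \<in> wds X \<and> u \<approx> v"
  by (auto simp: vag_def)

lemma vag_equiv: "equiv (wds X) (vag X)"
  by (rule equivI) (auto simp: vag_iff refl_on_def sym_def trans_def intro: v_refl v_sym v_trans)

lemma vag_class_eq: "u \<in> wds X \<Longrightarrow> v \<in> wds X \<Longrightarrow> vag X `` {u} = vag X `` {v} \<longleftrightarrow> u \<approx> v"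
  using equiv_class_eq_iff[OF vag_equiv, of u v X] by (simp add: vag_iff)

lemma FIM0_vagner_quotient: "vagner_quotient (FIM0 X) (\<lambda>u. vag X `` {u}) X"
proof
  show "fcar (FIM0 X) = (\<lambda>u. vag X `` {u}) ` wds X"
    by (auto simp: FIM0_def quotient_def)
  fix u v :: "'a word"
  assume u: "u \<in> wds X" and v: "v \<in> wds X"
  have some_u: "(SOME a. a \<in> vag X `` {u}) \<in> wds X \<and> u \<approx> (SOME a. a \<in> vag X `` {u})"
    and some_v: "(SOME a. a \<in> vag X `` {v}) \<in> wds X \<and> v \<approx> (SOME a. a \<in> vag X `` {v})"
    using some_in_class[OF vag_equiv u] some_in_class[OF vag_equiv v] unfolding vag_iff by blast+
  show "vag X `` {u} = vag X `` {v} \<longleftrightarrow> u \<approx> v"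
    using u v by (rule vag_class_eq)
  show "fmul (FIM0 X) (vag X `` {u}) (vag X `` {v}) = vag X `` {u @ v}"
    using some_u some_v u v by (simp add: FIM0_def vag_class_eq v_sym vagner_append)
  show "finv (FIM0 X) (vag X `` {u}) = vag X `` {winv u}"
    using some_u u by (simp add: FIM0_def vag_class_eq v_sym vagner_winv)
qed (simp add: FIM0_def)

lemma FIM_vagner_F_quotient: "vagner_F_quotient (FIM X) (\<lambda>u. vag X `` {u}) X"
proof -
  interpret FIM0: vagner_quotient "FIM0 X" "\<lambda>u. vag X `` {u}" X
    by (rule FIM0_vagner_quotient)
  show ?thesis
  proof unfold_locales
    show "fmx (FIM X) (vag X `` {u}) = vag X `` {red u}" if "u \<in> wds X" for u
      using FIM0.greatest_in_fsigma_class[OF that] by (simp add: FIM_def)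
  qed (simp_all add: FIM_def FIM0.car FIM0.mul FIM0.one FIM0.inv FIM0.eq_iff)
qed

section \<open>The presentation\<close>

context
  fixes X :: "'a set" and \<theta> :: "('a ftm \<times> 'a ftm) set"
  assumes fc: "fcong (tms X) \<theta>" and R: "red_rel X \<subseteq> \<theta>"
    and F: "F_inverse (quot \<theta> (tms X))"
begin

interpretation Q: inverse_monoid "quot \<theta> (tms X)"
  using F by unfold_locales (simp add: F_inverse_def)

lemma class_closed: "t \<in> tms X \<Longrightarrow> \<theta> `` {t} \<in> fcar (quot \<theta> (tms X))"
  by (simp add: quot_car quotientI)

lemma class_Tone: "\<theta> `` {Tone} = fone (quot \<theta> (tms X))"
  by (simp add: quot_one)

lemma class_Tmul:
  "s \<in> tms X \<Longrightarrow> t \<in> tms X \<Longrightarrow>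
    \<theta> `` {Tmul s t} = fmul (quot \<theta> (tms X)) (\<theta> `` {s}) (\<theta> `` {t})"
  by (simp add: quot_mul[OF fc])

lemma class_Tinv: "t \<in> tms X \<Longrightarrow> \<theta> `` {Tinv t} = finv (quot \<theta> (tms X)) (\<theta> `` {t})"
  by (simp add: quot_inv[OF fc])

lemma class_Tm: "t \<in> tms X \<Longrightarrow> \<theta> `` {Tm t} = fmx (quot \<theta> (tms X)) (\<theta> `` {t})"
  by (simp add: quot_mx[OF fc])

lemmas class_simps = class_closed class_Tone class_Tmul class_Tinv

\<comment> \<open>A Vagner derivation between words over \<open>X\<close> may pass through other letters; send them to 1.\<close>
definition letter_class :: "'a \<times> bool \<Rightarrow> 'a ftm set" where
  "letter_class a = (if fst a \<in> X then \<theta> `` {word_tm [a]} else \<theta> `` {Tone})"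

lemma letter_class_closed: "letter_class a \<in> fcar (quot \<theta> (tms X))"
  by (simp add: letter_class_def class_closed)

lemma letter_class_letter_inv:
  "letter_class (letter_inv a) = finv (quot \<theta> (tms X)) (letter_class a)"
  by (cases a) (auto simp: letter_class_def letter_inv_def class_simps)

lemmas weval_letter_class_append =
    Q.weval_append[where f = letter_class, OF letter_class_closed letter_class_letter_inv]
  and weval_letter_class_winv =
    Q.weval_winv[where f = letter_class, OF letter_class_closed letter_class_letter_inv]
  and weval_letter_class_vagner =
    Q.weval_vagner[where f = letter_class, OF letter_class_closed letter_class_letter_inv]

lemma weval_letter_class_word_tm:
  "u \<in> wds X \<Longrightarrow> weval (quot \<theta> (tms X)) letter_class u = \<theta> `` {word_tm u}"
proof (induction u)
  case (Cons a u)
  then show ?case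
    by (cases a; cases "snd a") (simp_all add: letter_class_def class_simps)
qed (simp add: class_Tone)

lemma class_eq_weval_word_of_tm:
  "t \<in> tms X \<Longrightarrow> \<theta> `` {t} = weval (quot \<theta> (tms X)) letter_class (word_of_tm t)"
proof (induction t)
  case (Tm t)
  have "(word_tm (red (word_of_tm t)), Tm (word_tm (word_of_tm t))) \<in> \<theta>"
    using R Tm.prems word_of_tm_in_wds by (auto simp: red_rel_def)
  then have "\<theta> `` {word_tm (red (word_of_tm t))} = \<theta> `` {Tm (word_tm (word_of_tm t))}"
    using equiv_class_eq[OF fcong_equiv[OF fc]] by simp
  with Tm show ?case
    by (simp add: class_Tm weval_letter_class_word_tm word_of_tm_in_wds)
qed (simp_all add: letter_class_def class_simps weval_letter_class_append weval_letter_class_winv)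

lemma word_kernel_subset: "word_kernel X \<subseteq> \<theta>"
proof (rule subrelI)
  fix s t assume "(s, t) \<in> word_kernel X"
  then have st: "s \<in> tms X" "t \<in> tms X" "word_of_tm s \<approx> word_of_tm t"
    by (simp_all add: word_kernel_iff)
  then have "\<theta> `` {s} = \<theta> `` {t}"
    using weval_letter_class_vagner by (simp add: class_eq_weval_word_of_tm)
  then show "(s, t) \<in> \<theta>"
    using eq_equiv_class[OF _ fcong_equiv[OF fc]] st by simp
qed

end

lemma pres_cong_red_rel: "pres_cong X (red_rel X) = word_kernel X"
proof (rule antisym)
  show "pres_cong X (red_rel X) \<subseteq> word_kernel X"
    unfolding pres_cong_def using word_kernel_fcong red_rel_subset_word_kernel
      vagner_F_quotient.F_inverse[OF quot_word_kernel] by blast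
  show "word_kernel X \<subseteq> pres_cong X (red_rel X)"
    unfolding pres_cong_def using word_kernel_subset by blast
qed

theorem mainTheorem12:
  fixes X :: "'a set"
  shows "F_inverse (FIM X) \<and>
    (\<exists>\<phi>. bij_betw \<phi> (fcar (FInv X (red_rel X))) (fcar (FIM X)) \<and>
         fhom \<phi> (FInv X (red_rel X)) (FIM X) \<and>
         (\<forall>x\<in>X. \<phi> (pres_cong X (red_rel X) `` {Gen x}) = vag X `` {[(x, True)]}))"
proof -
  have FInv: "FInv X (red_rel X) = quot (word_kernel X) (tms X)"
    by (simp add: FInv_def pres_cong_red_rel)
  obtain \<phi> where \<phi>: "bij_betw \<phi> (fcar (FInv X (red_rel X))) (fcar (FIM X))"
      "fhom \<phi> (FInv X (red_rel X)) (FIM X)"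
      "\<forall>u\<in>wds X. \<phi> (word_kernel X `` {word_tm u}) = vag X `` {u}"
    using vagner_F_quotient_iso[OF quot_word_kernel FIM_vagner_F_quotient]
    unfolding FInv by blast
  have "\<phi> (word_kernel X `` {Gen x}) = vag X `` {[(x, True)]}" if "x \<in> X" for x
  proof -
    have "word_kernel X `` {Gen x} = word_kernel X `` {word_tm [(x, True)]}"
      using that by (simp add: word_kernel_class_eq v_refl)
    then show ?thesis
      using that \<phi>(3)[rule_format, of "[(x, True)]"] by simp
  qed
  then have "\<forall>x\<in>X. \<phi> (pres_cong X (red_rel X) `` {Gen x}) = vag X `` {[(x, True)]}"
    by (simp add: pres_cong_red_rel)
  then show ?thesis
    using vagner_F_quotient.F_inverse[OF FIM_vagner_F_quotient] \<phi>(1,2) by blast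
qed

end
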